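(* Let $A$ and $B$ be C$^*$-algebras, where $A$ is unital with unit $1$, and let $T:A\to B$ be a bounded linear map which is a $^*$-homomorphism at a unitary element $u\in A$. Then $T(1)$ is a projection, $T(1)T(a)=T(a)T(1)$ for every $a\in A$, and $T(1)T$ (the map $a\mapsto T(1)T(a)$) is a Jordan homomorphism. Furthermore, if in addition $T(1)T(x)=T(x)$ for every $x\in A$ (which is the case when $B$ is unital and $T(u)$ is a unitary in $B$), then $T$ is a Jordan homomorphism.
   Context: A map $T:A\to B$ between C$^*$-algebras is a $^*$-homomorphism at $z\in A$ if for all $a,b\in A$ with $ab^*=z$ one has $T(ab^* )=T(a)T(b)^*=T(z)$, and for all $c,d\in A$ with $c^*d=z$ one has $T(c^*d)=T(c)^*T(d)=T(z)$. A Jordan homomorphism is a linear map $S$ with $S(a\circ b)=S(a)\circ S(b)$ for all $a,b$, where $a\circ b=\frac12(ab+ba)$. *)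

theory Defs
  imports Complex_Main
begin

text \<open>C*-algebras (possibly non-unital): complex Banach algebras with an
  involution satisfying the C*-identity. The complex scalar multiplication is
  a class parameter compatible with the real one.\<close>

class cstar_algebra = real_normed_algebra + banach +
  fixes cscale :: "complex \<Rightarrow> 'a \<Rightarrow> 'a" (infixr "*\<^sub>C" 75)
    and star :: "'a \<Rightarrow> 'a"
  assumes cscale_add_right: "c *\<^sub>C (x + y) = c *\<^sub>C x + c *\<^sub>C y"
    and cscale_add_left: "(c + d) *\<^sub>C x = c *\<^sub>C x + d *\<^sub>C x"
    and cscale_cscale: "c *\<^sub>C (d *\<^sub>C x) = (c * d) *\<^sub>C x"
    and cscale_one: "1 *\<^sub>C x = x"
    and scaleR_cscale: "scaleR r x = complex_of_real r *\<^sub>C x"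
    and norm_cscale: "norm (c *\<^sub>C x) = cmod c * norm x"
    and mult_cscale_left: "(c *\<^sub>C x) * y = c *\<^sub>C (x * y)"
    and mult_cscale_right: "x * (c *\<^sub>C y) = c *\<^sub>C (x * y)"
    and star_star: "star (star x) = x"
    and star_add: "star (x + y) = star x + star y"
    and star_cscale: "star (c *\<^sub>C x) = cnj c *\<^sub>C star x"
    and star_mult: "star (x * y) = star y * star x"
    and cstar_identity: "norm (star x * x) = norm x * norm x"

definition clinear :: "('a::cstar_algebra \<Rightarrow> 'b::cstar_algebra) \<Rightarrow> bool" where
  "clinear T \<longleftrightarrow> (\<forall>x y. T (x + y) = T x + T y) \<and> (\<forall>c x. T (c *\<^sub>C x) = c *\<^sub>C T x)"

definition bounded_clinear :: "('a::cstar_algebra \<Rightarrow> 'b::cstar_algebra) \<Rightarrow> bool" where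
  "bounded_clinear T \<longleftrightarrow> clinear T \<and> (\<exists>K. \<forall>x. norm (T x) \<le> norm x * K)"

definition star_hom_at :: "('a::cstar_algebra \<Rightarrow> 'b::cstar_algebra) \<Rightarrow> 'a \<Rightarrow> bool" where
  "star_hom_at T z \<longleftrightarrow>
     (\<forall>a b. a * star b = z \<longrightarrow> T (a * star b) = T a * star (T b) \<and> T a * star (T b) = T z) \<and>
     (\<forall>c d. star c * d = z \<longrightarrow> T (star c * d) = star (T c) * T d \<and> star (T c) * T d = T z)"

definition unitary :: "'a::{cstar_algebra, ring_1} \<Rightarrow> bool" where
  "unitary u \<longleftrightarrow> u * star u = 1 \<and> star u * u = 1"

definition projection :: "'a::cstar_algebra \<Rightarrow> bool" where
  "projection p \<longleftrightarrow> p * p = p \<and> star p = p"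

definition jordan_prod :: "'a::cstar_algebra \<Rightarrow> 'a \<Rightarrow> 'a" where
  "jordan_prod a b = (1/2 :: complex) *\<^sub>C (a * b + b * a)"

definition jordan_hom :: "('a::cstar_algebra \<Rightarrow> 'b::cstar_algebra) \<Rightarrow> bool" where
  "jordan_hom S \<longleftrightarrow> clinear S \<and> (\<forall>a b. S (jordan_prod a b) = jordan_prod (S a) (S b))"

end

theory Submission
  imports Defs "HOL-Analysis.Analysis"
begin

text \<open>
  For small \<open>t > 0\<close> the element \<open>1 - t x\<close> has an inverse \<open>v t\<close> given by the Neumann series, and
  \<open>u (1 - t x) \<cdot> v t = u\<close> is a factorization to which the hypothesis at \<open>u\<close> applies:
  \<open>T(u (1 - t x)) T(v t\<^sup>*)\<^sup>* = T u\<close>. Expanding in powers of \<open>t\<close> and comparing the coefficients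
  of \<open>1, t, t\<^sup>2\<close> gives \<open>T(u) T(1)\<^sup>* = T(u)\<close>, \<open>T(u) T(x\<^sup>*)\<^sup>* = T(u x) T(1)\<^sup>*\<close> and
  \<open>T(u) T((x\<^sup>2)\<^sup>*)\<^sup>* = T(u x) T(x\<^sup>*)\<^sup>*\<close>; applied to \<open>a \<mapsto> T(a\<^sup>*)\<^sup>*\<close> at \<open>u\<^sup>*\<close> the same
  argument gives the mirrored identities. Taking \<open>x = u\<^sup>*\<close> shows
  \<open>T(u) T(u)\<^sup>* = T(1) T(1)\<^sup>*\<close> and \<open>T(u)\<^sup>* T(u) = T(1)\<^sup>* T(1)\<close>, and the C*-identity then forces
  \<open>T(1)\<close> to be a projection. Multiplying the remaining identities by \<open>T(u)\<^sup>*\<close> shows that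
  \<open>T(1)\<close> commutes with the range of \<open>T\<close> and that \<open>T(1) T\<close> preserves squares, hence is a
  Jordan homomorphism.
\<close>

lemma star_zero [simp]: "star (0::'a::cstar_algebra) = 0"
  using star_add[of "0::'a" 0] by simp

lemma star_minus: "star (- x) = - star (x::'a::cstar_algebra)"
  using star_add[of x "- x"] by (simp add: eq_neg_iff_add_eq_0 add.commute)

lemma star_diff: "star (x - y) = star x - star (y::'a::cstar_algebra)"
  using star_add[of x "- y"] by (simp add: star_minus)

lemma star_one [simp]: "star (1::'a::{cstar_algebra, ring_1}) = 1"
  using star_mult[of "star (1::'a)" 1] by (simp add: star_star)

lemma norm_star [simp]: "norm (star x) = norm (x::'a::cstar_algebra)"
proof -
  have le: "norm y \<le> norm (star y)" for y :: 'a
  proof (cases "y = 0")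
    case False
    have "norm y * norm y \<le> norm (star y) * norm y"
      using cstar_identity[of y] norm_mult_ineq[of "star y" y] by simp
    then show ?thesis using False by simp
  qed simp
  show ?thesis using le[of x] le[of "star x"] by (simp add: star_star)
qed

lemma star_mult_self_eq_zero_iff: "star x * x = 0 \<longleftrightarrow> x = (0::'a::cstar_algebra)"
  using cstar_identity[of x] by auto

lemma bounded_clinear_imp_bounded_linear: "bounded_clinear T \<Longrightarrow> bounded_linear T"
  unfolding bounded_clinear_def clinear_def by (auto intro: bounded_linear_intro simp: scaleR_cscale)

definition star_conj :: "('a::cstar_algebra \<Rightarrow> 'b::cstar_algebra) \<Rightarrow> 'a \<Rightarrow> 'b" where
  "star_conj T a = star (T (star a))"

lemma bounded_clinear_star_conj:
  assumes "bounded_clinear T"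
  shows "bounded_clinear (star_conj T)"
proof -
  obtain K where K: "\<And>x. norm (T x) \<le> norm x * K" and "clinear T"
    using assms unfolding bounded_clinear_def by blast
  then have "clinear (star_conj T)"
    unfolding clinear_def star_conj_def by (simp add: star_add star_cscale star_star)
  moreover have "norm (star_conj T x) \<le> norm x * K" for x
    using K[of "star x"] by (simp add: star_conj_def)
  ultimately show ?thesis unfolding bounded_clinear_def by blast
qed

lemma star_hom_at_star_conj:
  assumes "star_hom_at T z"
  shows "star_hom_at (star_conj T) (star z)"
  unfolding star_hom_at_def
proof (rule conjI; intro allI impI)
  fix a b assume "a * star b = star z"
  then have "star (a * star b) = star (star z)" by (rule arg_cong)
  then have ba: "star (star b) * star a = z" by (simp add: star_mult star_star[of z])
  then have "star (T (star b)) * T (star a) = T z"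
    using assms unfolding star_hom_at_def by blast
  then have "star (star (T (star b)) * T (star a)) = star (T z)" by (rule arg_cong)
  then show "star_conj T (a * star b) = star_conj T a * star (star_conj T b)
      \<and> star_conj T a * star (star_conj T b) = star_conj T (star z)"
    using ba by (simp add: star_conj_def star_mult star_star)
next
  fix c d assume "star c * d = star z"
  then have "star (star c * d) = star (star z)" by (rule arg_cong)
  then have dc: "star d * star (star c) = z" by (simp add: star_mult star_star[of z])
  then have "T (star d) * star (T (star c)) = T z"
    using assms unfolding star_hom_at_def by blast
  then have "star (T (star d) * star (T (star c))) = star (T z)" by (rule arg_cong)
  then show "star_conj T (star c * d) = star (star_conj T c) * star_conj T d
      \<and> star (star_conj T c) * star_conj T d = star_conj T (star z)"
    using dc by (simp add: star_conj_def star_mult star_star)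
qed

lemma star_hom_at_right_factor:
  assumes "star_hom_at T z" and "a * c = z"
  shows "T a * star_conj T c = T z"
proof -
  have "a * star (star c) = z" using assms(2) by (simp add: star_star)
  then show ?thesis using assms(1) unfolding star_hom_at_def star_conj_def by blast
qed

lemma affine_contraction_unique_fixpoint:
  fixes c y :: "'a::{real_normed_algebra, banach}"
  assumes "norm y \<le> 1/2"
  shows "\<exists>!s. s = c + y * s"
proof -
  have "\<exists>!s. c + y * s = s"
  proof (rule banach_fix_type[of "1/2"])
    show "\<forall>a b. dist (c + y * a) (c + y * b) \<le> 1/2 * dist a b"
    proof (intro allI)
      fix a b :: 'a
      have "norm (y * a - y * b) \<le> norm y * norm (a - b)"
        using norm_mult_ineq[of y "a - b"] by (simp add: algebra_simps)
      also have "\<dots> \<le> 1/2 * norm (a - b)" using assms by (intro mult_right_mono) auto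
      finally show "dist (c + y * a) (c + y * b) \<le> 1/2 * dist a b" by (simp add: dist_norm)
    qed
  qed auto
  then show ?thesis by metis
qed

lemma neumann_inverse:
  fixes y :: "'a::{real_normed_algebra, banach, ring_1}"
  assumes "norm y \<le> 1/2"
  obtains v where "(1 - y) * v = 1" and "v * (1 - y) = 1" and "norm v \<le> 2 * norm (1::'a)"
proof -
  obtain v where v: "v = 1 + y * v"
    using affine_contraction_unique_fixpoint[OF assms] by blast
  \<comment> \<open>both \<open>y v\<close> and \<open>v y\<close> are fixed points of \<open>s \<mapsto> y + y s\<close>\<close>
  have "y * v = y + y * (y * v)" by (subst v) (simp add: algebra_simps)
  moreover have "v * y = y + y * (v * y)" by (subst (1) v) (simp add: algebra_simps)
  ultimately have commute: "y * v = v * y"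
    using affine_contraction_unique_fixpoint[OF assms, of y] by blast
  have "norm v \<le> norm (1::'a) + norm y * norm v"
    using v norm_triangle_ineq[of 1 "y * v"] norm_mult_ineq[of y v] by simp
  also have "\<dots> \<le> norm (1::'a) + 1/2 * norm v"
    using assms by (intro add_left_mono mult_right_mono) auto
  finally have "norm v \<le> 2 * norm (1::'a)" by simp
  moreover have "(1 - y) * v = 1" and "v * (1 - y) = 1"
    using v commute by (simp_all add: algebra_simps)
  ultimately show ?thesis using that by blast
qed

lemma at_right_0_coefficient_eq_0:
  fixes c :: "'a::real_normed_vector"
  assumes eq: "\<forall>\<^sub>F t in at_right 0. c + t *\<^sub>R g t = 0"
    and lim: "((\<lambda>t. t *\<^sub>R g t) \<longlongrightarrow> 0) (at_right 0)"
  shows "c = 0" and "\<forall>\<^sub>F t in at_right 0. g t = 0"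
proof -
  have "((\<lambda>t. - (t *\<^sub>R g t)) \<longlongrightarrow> 0) (at_right 0)"
    using tendsto_minus[OF lim] by simp
  moreover have "\<forall>\<^sub>F t in at_right 0. - (t *\<^sub>R g t) = c"
    using eq by eventually_elim (metis add.commute minus_unique)
  ultimately have "((\<lambda>t. c) \<longlongrightarrow> 0) (at_right (0::real))"
    by (rule Lim_transform_eventually)
  then show c: "c = 0" by (simp add: tendsto_const_iff trivial_limit_at_right_real)
  show "\<forall>\<^sub>F t in at_right 0. g t = 0"
    using eq eventually_at_right_less[of 0] by eventually_elim (simp add: c)
qed

lemma at_right_0_three_coefficients_eq_0:
  fixes c0 c1 c2 :: "'a::real_normed_vector"
  assumes eq: "\<forall>\<^sub>F t in at_right 0. c0 + t *\<^sub>R (c1 + t *\<^sub>R (c2 + t *\<^sub>R r t)) = 0"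
    and remainder: "((\<lambda>t. t *\<^sub>R r t) \<longlongrightarrow> 0) (at_right 0)"
  shows "c0 = 0" and "c1 = 0" and "c2 = 0"
proof -
  have lim2: "((\<lambda>t. c2 + t *\<^sub>R r t) \<longlongrightarrow> c2) (at_right 0)"
    using tendsto_add[OF tendsto_const remainder] by simp
  then have "((\<lambda>t. c1 + t *\<^sub>R (c2 + t *\<^sub>R r t)) \<longlongrightarrow> c1) (at_right 0)"
    using tendsto_add[OF tendsto_const tendsto_scaleR[OF tendsto_ident_at]] by fastforce
  then have "((\<lambda>t. t *\<^sub>R (c1 + t *\<^sub>R (c2 + t *\<^sub>R r t))) \<longlongrightarrow> 0) (at_right 0)"
    using tendsto_scaleR[OF tendsto_ident_at] by fastforce
  from at_right_0_coefficient_eq_0[OF eq this]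
  have c0: "c0 = 0" and eq1: "\<forall>\<^sub>F t in at_right 0. c1 + t *\<^sub>R (c2 + t *\<^sub>R r t) = 0" .
  have "((\<lambda>t. t *\<^sub>R (c2 + t *\<^sub>R r t)) \<longlongrightarrow> 0) (at_right 0)"
    using tendsto_scaleR[OF tendsto_ident_at lim2] by simp
  from at_right_0_coefficient_eq_0[OF eq1 this]
  have c1: "c1 = 0" and eq2: "\<forall>\<^sub>F t in at_right 0. c2 + t *\<^sub>R r t = 0" .
  have "c2 = 0"
    using eq2 remainder by (rule at_right_0_coefficient_eq_0)
  with c0 c1 show "c0 = 0" and "c1 = 0" and "c2 = 0" by simp_all
qed

lemma inverse_one_minus_expansion:
  fixes x v :: "'a::{real_algebra, ring_1}"
  assumes "(1 - t *\<^sub>R x) * v = 1"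
  shows "v = 1 + t *\<^sub>R (x + t *\<^sub>R (x * x + t *\<^sub>R (x * x * x * v)))"
proof -
  let ?y = "t *\<^sub>R x"
  have "1 + ?y + ?y * ?y = (1 + ?y + ?y * ?y) * ((1 - ?y) * v)"
    using assms by simp
  also have "\<dots> = v - ?y * ?y * ?y * v"
    by (simp add: algebra_simps)
  finally have "v = 1 + ?y + ?y * ?y + ?y * ?y * ?y * v"
    by (simp add: eq_diff_eq)
  also have "\<dots> = 1 + t *\<^sub>R (x + t *\<^sub>R (x * x + t *\<^sub>R (x * x * x * v)))"
    by (simp add: algebra_simps)
  finally show ?thesis .
qed

lemma eventually_right_inverse_one_minus:
  fixes x :: "'a::{real_normed_algebra, banach, ring_1}"
  obtains v where "\<forall>\<^sub>F t in at_right 0. (1 - t *\<^sub>R x) * v t = 1"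
    and "((\<lambda>t. t *\<^sub>R v t) \<longlongrightarrow> 0) (at_right 0)"
proof -
  have "\<forall>t. \<exists>w. norm (t *\<^sub>R x) \<le> 1/2 \<longrightarrow>
      (1 - t *\<^sub>R x) * w = 1 \<and> norm w \<le> 2 * norm (1::'a)"
    by (metis neumann_inverse)
  then obtain v where v: "\<And>t. norm (t *\<^sub>R x) \<le> 1/2 \<Longrightarrow>
      (1 - t *\<^sub>R x) * v t = 1 \<and> norm (v t) \<le> 2 * norm (1::'a)"
    by metis
  have "((\<lambda>t. norm (t *\<^sub>R x)) \<longlongrightarrow> 0) (at_right (0::real))"
    by (intro tendsto_eq_intros tendsto_ident_at) auto
  then have small: "\<forall>\<^sub>F t in at_right 0. norm (t *\<^sub>R x) \<le> 1/2"
    by (rule eventually_mono[OF order_tendstoD(2)[of _ 0 _ "1/2"]]) auto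
  have "((\<lambda>t. t *\<^sub>R v t) \<longlongrightarrow> 0) (at_right 0)"
    by (rule lim_null_scaleR_bounded[OF tendsto_ident_at, where B = "2 * norm (1::'a)"])
      (use small in \<open>eventually_elim, use v in blast\<close>)
  moreover have "\<forall>\<^sub>F t in at_right 0. (1 - t *\<^sub>R x) * v t = 1"
    using small by eventually_elim (use v in blast)
  ultimately show ?thesis using that by blast
qed

lemma star_hom_at_perturbation_expansion:
  fixes T :: "'a::{cstar_algebra, ring_1} \<Rightarrow> 'b::cstar_algebra"
  assumes "bounded_clinear T" and hom: "star_hom_at T u"
  obtains R where "\<forall>\<^sub>F t in at_right 0. (T u - t *\<^sub>R T (u * x)) * (star_conj T 1
      + t *\<^sub>R (star_conj T x + t *\<^sub>R (star_conj T (x * x) + t *\<^sub>R R t))) = T u"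
    and "((\<lambda>t. t *\<^sub>R R t) \<longlongrightarrow> 0) (at_right 0)"
proof -
  define S where "S = star_conj T"
  interpret T: bounded_linear T
    using assms(1) by (rule bounded_clinear_imp_bounded_linear)
  interpret S: bounded_linear S
    unfolding S_def using assms(1) by (intro bounded_clinear_imp_bounded_linear bounded_clinear_star_conj)
  obtain v where inv: "\<forall>\<^sub>F t in at_right 0. (1 - t *\<^sub>R x) * v t = 1"
    and lim: "((\<lambda>t. t *\<^sub>R v t) \<longlongrightarrow> 0) (at_right 0)"
    by (rule eventually_right_inverse_one_minus)
  have "\<forall>\<^sub>F t in at_right 0. (T u - t *\<^sub>R T (u * x))
      * (S 1 + t *\<^sub>R (S x + t *\<^sub>R (S (x * x) + t *\<^sub>R S (x * x * x * v t)))) = T u"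
    using inv
  proof eventually_elim
    case (elim t)
    have "T (u * (1 - t *\<^sub>R x)) * S (v t) = T u"
      unfolding S_def by (rule star_hom_at_right_factor[OF hom]) (simp add: mult.assoc elim)
    moreover have "T (u * (1 - t *\<^sub>R x)) = T u - t *\<^sub>R T (u * x)"
      by (simp add: algebra_simps T.diff T.scaleR)
    moreover have "S (v t) = S 1 + t *\<^sub>R (S x + t *\<^sub>R (S (x * x) + t *\<^sub>R S (x * x * x * v t)))"
      using inverse_one_minus_expansion[OF elim] by (metis S.add S.scaleR)
    ultimately show ?case by simp
  qed
  moreover have "((\<lambda>t. t *\<^sub>R S (x * x * x * v t)) \<longlongrightarrow> 0) (at_right 0)"
    using S.tendsto_zero[OF tendsto_mult_right_zero[OF lim, of "x * x * x"]] by (simp add: S.scaleR)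
  ultimately show ?thesis
    using that[of "\<lambda>t. S (x * x * x * v t)"] unfolding S_def by blast
qed

lemma star_hom_at_perturbation_identities:
  fixes T :: "'a::{cstar_algebra, ring_1} \<Rightarrow> 'b::cstar_algebra"
  assumes "bounded_clinear T" and "star_hom_at T u"
  shows "T u * star_conj T 1 = T u"
    and "T u * star_conj T x = T (u * x) * star_conj T 1"
    and "T u * star_conj T (x * x) = T (u * x) * star_conj T x"
proof -
  define S U Y where "S = star_conj T" and "U = T u" and "Y = T (u * x)"
  obtain R where expansion: "\<forall>\<^sub>F t in at_right 0.
      (U - t *\<^sub>R Y) * (S 1 + t *\<^sub>R (S x + t *\<^sub>R (S (x * x) + t *\<^sub>R R t))) = U"
    and lim: "((\<lambda>t. t *\<^sub>R R t) \<longlongrightarrow> 0) (at_right 0)"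
    unfolding S_def U_def Y_def using star_hom_at_perturbation_expansion[OF assms] by blast
  define r where "r t = (U - t *\<^sub>R Y) * R t - Y * S (x * x)" for t
  have "\<forall>\<^sub>F t in at_right 0. (U * S 1 - U) + t *\<^sub>R ((U * S x - Y * S 1)
      + t *\<^sub>R ((U * S (x * x) - Y * S x) + t *\<^sub>R r t)) = 0"
    using expansion by eventually_elim (simp add: r_def algebra_simps)
  moreover have "((\<lambda>t. t *\<^sub>R r t) \<longlongrightarrow> 0) (at_right 0)"
  proof -
    have "((\<lambda>t. (U - t *\<^sub>R Y) * (t *\<^sub>R R t) - t *\<^sub>R (Y * S (x * x)))
        \<longlongrightarrow> (U - 0 *\<^sub>R Y) * 0 - 0 *\<^sub>R (Y * S (x * x))) (at_right 0)"
      by (intro tendsto_intros lim tendsto_ident_at)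
    then show ?thesis
      by (simp add: r_def algebra_simps)
  qed
  ultimately have "U * S 1 - U = 0" and "U * S x - Y * S 1 = 0" and "U * S (x * x) - Y * S x = 0"
    by (rule at_right_0_three_coefficients_eq_0)+
  then show "T u * star_conj T 1 = T u"
    and "T u * star_conj T x = T (u * x) * star_conj T 1"
    and "T u * star_conj T (x * x) = T (u * x) * star_conj T x"
    by (simp_all add: S_def U_def Y_def)
qed

lemma star_hom_at_perturbation_identities_left:
  fixes T :: "'a::{cstar_algebra, ring_1} \<Rightarrow> 'b::cstar_algebra"
  assumes "bounded_clinear T" and "star_hom_at T u"
  shows "star_conj T 1 * T u = T u"
    and "star_conj T x * T u = star_conj T 1 * T (x * u)"
proof -
  \<comment> \<open>the right-hand identities for \<open>star_conj T\<close> at \<open>star u\<close>, conjugated\<close>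
  note identities = star_hom_at_perturbation_identities[OF
      bounded_clinear_star_conj[OF assms(1)] star_hom_at_star_conj[OF assms(2)]]
  have "star (star (T u) * T 1) = star (star (T u))"
    using identities(1) by (simp add: star_conj_def star_star)
  then show "star_conj T 1 * T u = T u"
    by (simp add: star_conj_def star_mult star_star)
  have "star (star (T u) * T (star x)) = star (star (T (x * u)) * T 1)"
    using identities(2)[of "star x"] by (simp add: star_conj_def star_mult star_star)
  then show "star_conj T x * T u = star_conj T 1 * T (x * u)"
    by (simp add: star_conj_def star_mult star_star)
qed

lemma projection_if_star_products_absorb:
  fixes p :: "'a::cstar_algebra"
  assumes left: "star p * p * star p = star p * p" and right: "p * star p * p = p * star p"
  shows "projection p"
proof -
  define q where "q = star p * p"
  have "star (star p * p * star p) = star (star p * p)"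
    using left by simp
  then have "p * star p * p = q"
    by (simp add: q_def star_mult star_star mult.assoc)
  then have "q = p * star p" and qp: "q * p = q"
    using right by simp_all
  have q_star: "star q = q"
    by (simp add: q_def star_mult star_star)
  have qq: "q * q = q"
    using left qp unfolding q_def by (metis mult.assoc)
  have "star p * q = q"
    using arg_cong[OF qp, of star] q_star by (simp add: star_mult)
  then have "star (p - q) * (p - q) = 0"
    by (simp add: star_diff algebra_simps q_star qp qq flip: q_def)
  then have "p = q"
    by (simp add: star_mult_self_eq_zero_iff)
  then show ?thesis
    unfolding projection_def using q_star qq by simp
qed

lemma jordan_hom_if_preserves_squares:
  assumes "clinear S" and squares: "\<And>a. S (a * a) = S a * S a"
  shows "jordan_hom S"
proof -
  have add: "S (x + y) = S x + S y" and cscale: "S (c *\<^sub>C x) = c *\<^sub>C S x" for x y c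
    using assms(1) unfolding clinear_def by blast+
  have "S (a * b + b * a) = S a * S b + S b * S a" for a b
  proof -
    have "S (a * a) + S (a * b + b * a) + S (b * b) = S ((a + b) * (a + b))"
      by (simp add: add algebra_simps)
    also have "\<dots> = S (a * a) + (S a * S b + S b * S a) + S (b * b)"
      unfolding squares by (simp add: add algebra_simps)
    finally show ?thesis by (simp only: add_left_cancel add_right_cancel)
  qed
  then show ?thesis
    using assms(1) unfolding jordan_hom_def jordan_prod_def by (simp add: cscale)
qed

locale unitary_star_hom_at =
  fixes T :: "'a::{cstar_algebra, ring_1} \<Rightarrow> 'b::cstar_algebra" and u :: 'a
  assumes bounded: "bounded_clinear T" and unitary: "unitary u" and hom: "star_hom_at T u"
begin

lemmas right_identities = star_hom_at_perturbation_identities[OF bounded hom]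
lemmas left_identities = star_hom_at_perturbation_identities_left[OF bounded hom]

lemma star_conj_one: "star_conj T 1 = star (T 1)"
  by (simp add: star_conj_def)

lemma T_unitary_mult_star: "T u * star (T u) = T 1 * star (T 1)"
  using right_identities(2)[of "star u"] unitary
  by (simp add: star_conj_def star_star unitary_def star_conj_one)

lemma star_mult_T_unitary: "star (T u) * T u = star (T 1) * T 1"
  using left_identities(2)[of "star u"] unitary
  by (simp add: star_conj_def unitary_def star_conj_one star_star)

lemma projection_T_one: "projection (T 1)"
proof (rule projection_if_star_products_absorb)
  have "T u * star (T 1) = T u"
    using right_identities(1) by (simp add: star_conj_one)
  then show "star (T 1) * T 1 * star (T 1) = star (T 1) * T 1"
    by (metis star_mult_T_unitary mult.assoc)
  have "star (star (T 1) * T u) = star (T u)"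
    using left_identities(1) by (simp add: star_conj_one)
  then have "star (T u) * T 1 = star (T u)"
    by (simp add: star_mult star_star)
  then show "T 1 * star (T 1) * T 1 = T 1 * star (T 1)"
    by (metis T_unitary_mult_star mult.assoc)
qed

lemma star_T_one: "star (T 1) = T 1" and T_one_idem: "T 1 * T 1 = T 1"
  using projection_T_one unfolding projection_def by simp_all

lemma T_unitary_mult_star_eq: "T u * star (T u) = T 1"
  by (simp add: T_unitary_mult_star star_T_one T_one_idem)

lemma T_one_commute_star_conj: "T 1 * star_conj T x = star_conj T x * T 1"
proof -
  have "star (T u) * T u = T 1"
    by (simp add: star_mult_T_unitary star_T_one T_one_idem)
  moreover have "T u * star_conj T x = T (u * x) * T 1"
    using right_identities(2) by (simp add: star_conj_one star_T_one)
  ultimately have "T 1 * star_conj T x = star (T u) * T (u * x) * T 1"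
    by (metis mult.assoc)
  then have left: "T 1 * star_conj T x * T 1 = T 1 * star_conj T x"
    by (simp add: mult.assoc T_one_idem)
  have "star_conj T x * T u = T 1 * T (x * u)"
    using left_identities(2) by (simp add: star_conj_one star_T_one)
  then have "star_conj T x * T 1 = T 1 * T (x * u) * star (T u)"
    using T_unitary_mult_star_eq by (metis mult.assoc)
  then have right: "T 1 * star_conj T x * T 1 = star_conj T x * T 1"
    by (metis mult.assoc T_one_idem)
  show ?thesis using left right by simp
qed

lemma T_one_commute: "T 1 * T a = T a * T 1"
  using arg_cong[OF T_one_commute_star_conj[of "star a"], of star]
  by (simp add: star_conj_def star_mult star_star star_T_one)

lemma T_one_mult_star_conj_square:
  "T 1 * star_conj T (x * x) = T 1 * (star_conj T x * star_conj T x)"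
proof -
  have ux: "T u * star_conj T x = T (u * x) * T 1"
    using right_identities(2) by (simp add: star_conj_one star_T_one)
  have "T u * star_conj T (x * x) * T 1 = T (u * x) * T 1 * star_conj T x"
    using right_identities(3) T_one_commute_star_conj by (simp add: mult.assoc)
  also have "\<dots> = T u * star_conj T x * star_conj T x"
    by (simp add: ux)
  finally have "star (T u) * (T u * star_conj T (x * x) * T 1)
      = star (T u) * (T u * star_conj T x * star_conj T x)"
    by simp
  then have "T 1 * star_conj T (x * x) * T 1 = T 1 * star_conj T x * star_conj T x"
    by (simp add: mult.assoc[symmetric] star_mult_T_unitary star_T_one T_one_idem)
  then show ?thesis
    using T_one_commute_star_conj[of "x * x"] by (simp add: mult.assoc T_one_idem)
qed

lemma T_one_mult_square: "T 1 * T (a * a) = T 1 * (T a * T a)"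
proof -
  have "star (T 1 * star_conj T (star a * star a))
      = star (T 1 * (star_conj T (star a) * star_conj T (star a)))"
    using T_one_mult_star_conj_square by simp
  then have "T (a * a) * T 1 = T a * T a * T 1"
    by (simp add: star_conj_def star_mult star_star star_T_one mult.assoc)
  then show ?thesis
    using T_one_commute by (metis mult.assoc)
qed

lemma jordan_hom_T_one_mult: "jordan_hom (\<lambda>a. T 1 * T a)"
proof (rule jordan_hom_if_preserves_squares)
  show "clinear (\<lambda>a. T 1 * T a)"
    using bounded unfolding bounded_clinear_def clinear_def
    by (simp add: distrib_left mult_cscale_right)
  show "T 1 * T (a * a) = T 1 * T a * (T 1 * T a)" for a
    using T_one_mult_square T_one_commute T_one_idem by (metis mult.assoc)
qed

end

theorem theorem3p1:
  fixes T :: "'a::{cstar_algebra, ring_1} \<Rightarrow> 'b::cstar_algebra" and u :: 'a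
  assumes "bounded_clinear T" and "unitary u" and "star_hom_at T u"
  shows "projection (T 1)
    \<and> (\<forall>a. T 1 * T a = T a * T 1)
    \<and> jordan_hom (\<lambda>a. T 1 * T a)
    \<and> ((\<exists>e::'b. (\<forall>y. e * y = y \<and> y * e = y) \<and> T u * star (T u) = e \<and> star (T u) * T u = e)
         \<longrightarrow> (\<forall>x. T 1 * T x = T x))
    \<and> ((\<forall>x. T 1 * T x = T x) \<longrightarrow> jordan_hom T)"
proof -
  interpret unitary_star_hom_at T u
    using assms by unfold_locales
  have "(\<exists>e::'b. (\<forall>y. e * y = y \<and> y * e = y) \<and> T u * star (T u) = e \<and> star (T u) * T u = e)
      \<longrightarrow> (\<forall>x. T 1 * T x = T x)"
    using T_unitary_mult_star_eq by auto
  moreover have "jordan_hom T" if "\<forall>x. T 1 * T x = T x"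
  proof -
    have "(\<lambda>a. T 1 * T a) = T" using that by simp
    then show ?thesis using jordan_hom_T_one_mult by simp
  qed
  ultimately show ?thesis
    using projection_T_one T_one_commute jordan_hom_T_one_mult by blast
qed

end
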